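(* Let $\Phi=(\varphi_n)_{n\in\mathbb{N}}$ be a depth-bounded fuzzy bisimulation between fuzzy automata $\mathcal{A}$ and $\mathcal{A}'$. Then for every $n\in\mathbb{N}$ and every $(x,x')\in A\times A'$: $\varphi_n(x,x')\le E(\mathbf{L}^{\le n}(\mathcal{A}_x),\mathbf{L}^{\le n}(\mathcal{A}'_{x'}))$ and $\|\varphi_n\|^b_{\mathcal{A},\mathcal{A}'}\le E(\mathbf{L}^{\le n}(\mathcal{A}),\mathbf{L}^{\le n}(\mathcal{A}'))$.
   Context: $\mathcal{L}=\langle L,\le,\otimes,\Rightarrow,0,1\rangle$ is a complete residuated lattice: $\langle L,\le,0,1\rangle$ is a complete lattice with least element $0$ and greatest element $1$, $\langle L,\otimes,1\rangle$ is a commutative monoid, and $x\otimes y\le z$ iff $x\le (y\Rightarrow z)$; $x\Leftrightarrow y=(x\Rightarrow y)\wedge(y\Rightarrow x)$. Fuzzy sets/relations are maps into $L$ ordered pointwise; $\varphi^{-1}(b,a)=\varphi(a,b)$; $(\varphi\circ\psi)(a,c)=\bigvee_b\varphi(a,b)\otimes\psi(b,c)$, $(f\circ\varphi)(b)=\bigvee_a f(a)\otimes\varphi(a,b)$, $(\varphi\circ g)(a)=\bigvee_b\varphi(a,b)\otimes g(b)$; $S(g,f)=\bigwedge_a(g(a)\Rightarrow f(a))$, $E(g,f)=\bigwedge_a(g(a)\Leftrightarrow f(a))$. A fuzzy automaton over $\Sigma$ is $\mathcal{A}=\langle A,\delta^{\mathcal{A}},\sigma^{\mathcal{A}},\tau^{\mathcal{A}}\rangle$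 with $A$ nonempty, $\delta^{\mathcal{A}}:A\times\Sigma\times A\to L$, $\sigma^{\mathcal{A}},\tau^{\mathcal{A}}:A\to L$; $\delta^{\mathcal{A}}_s(x,y)=\delta^{\mathcal{A}}(x,s,y)$; similarly $\mathcal{A}'$ with states $A'$. $\mathcal{A}_x$ differs from $\mathcal{A}$ only in that its initial fuzzy set is $\{x:1\}$. $\mathbf{L}(\mathcal{A})(s_1\cdots s_k)=\sigma^{\mathcal{A}}\circ\delta^{\mathcal{A}}_{s_1}\circ\cdots\circ\delta^{\mathcal{A}}_{s_k}\circ\tau^{\mathcal{A}}$; $\mathbf{L}^{\le n}(\mathcal{A})(w)=\mathbf{L}(\mathcal{A})(w)$ if $|w|\le n$, else $0$. For $\varphi:A\times A'\to L$: $\|\varphi\|_{\mathcal{A},\mathcal{A}'}=S(\sigma^{\mathcal{A}},\sigma^{\mathcal{A}'}\circ\varphi^{-1})$ and $\|\varphi\|^b_{\mathcal{A},\mathcal{A}'}=\|\varphi\|_{\mathcal{A},\mathcal{A}'}\wedge\|\varphi^{-1}\|_{\mathcal{A}',\mathcal{A}}$. A depth-bounded fuzzy bisimulation between $\mathcal{A}$ and $\mathcal{A}'$ is a sequence $(\varphi_n)_{n\in\mathbb{N}}$ of fuzzy relations $A\times A'\to L$ with $\varphi_n\le\varphi_{n-1}$ ($n\ge1$), $\varphi_0^{-1}\circ\tau^{\mathcal{A}}\le\tau^{\mathcal{A}'}$, $\varphi_0\circ\tau^{\mathcal{A}'}\le\tau^{\mathcal{A}}$, and for all $s\in\Sigma,n\ge1$: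 $\varphi_n^{-1}\circ\delta^{\mathcal{A}}_s\le\delta^{\mathcal{A}'}_s\circ\varphi_{n-1}^{-1}$ and $\varphi_n\circ\delta^{\mathcal{A}'}_s\le\delta^{\mathcal{A}}_s\circ\varphi_{n-1}$. *)

theory Defs
  imports Main
begin

class complete_residuated_lattice = complete_lattice +
  fixes otimes :: "'a \<Rightarrow> 'a \<Rightarrow> 'a" (infixl "\<otimes>" 70)
    and residuum :: "'a \<Rightarrow> 'a \<Rightarrow> 'a" (infixr "\<Rrightarrow>" 60)
  assumes otimes_assoc: "(x \<otimes> y) \<otimes> z = x \<otimes> (y \<otimes> z)"
    and otimes_commute: "x \<otimes> y = y \<otimes> x"
    and otimes_top: "x \<otimes> top = x"
    and residuation: "x \<otimes> y \<le> z \<longleftrightarrow> x \<le> (y \<Rrightarrow> z)"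

definition conv :: "('a \<Rightarrow> 'b \<Rightarrow> 'l) \<Rightarrow> 'b \<Rightarrow> 'a \<Rightarrow> 'l" where
  "conv \<phi> b a = \<phi> a b"

definition rel_comp :: "('a \<Rightarrow> 'b \<Rightarrow> 'l::complete_residuated_lattice) \<Rightarrow> ('b \<Rightarrow> 'c \<Rightarrow> 'l) \<Rightarrow> 'a \<Rightarrow> 'c \<Rightarrow> 'l" where
  "rel_comp \<phi> \<psi> a c = (SUP b. \<phi> a b \<otimes> \<psi> b c)"

definition set_rel_comp :: "('a \<Rightarrow> 'l::complete_residuated_lattice) \<Rightarrow> ('a \<Rightarrow> 'b \<Rightarrow> 'l) \<Rightarrow> 'b \<Rightarrow> 'l" where
  "set_rel_comp f \<phi> b = (SUP a. f a \<otimes> \<phi> a b)"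

definition rel_set_comp :: "('a \<Rightarrow> 'b \<Rightarrow> 'l::complete_residuated_lattice) \<Rightarrow> ('b \<Rightarrow> 'l) \<Rightarrow> 'a \<Rightarrow> 'l" where
  "rel_set_comp \<phi> g a = (SUP b. \<phi> a b \<otimes> g b)"

definition fsubs :: "('a \<Rightarrow> 'l::complete_residuated_lattice) \<Rightarrow> ('a \<Rightarrow> 'l) \<Rightarrow> 'l" where
  "fsubs g f = (INF a. g a \<Rrightarrow> f a)"

definition feq :: "('a \<Rightarrow> 'l::complete_residuated_lattice) \<Rightarrow> ('a \<Rightarrow> 'l) \<Rightarrow> 'l" where
  "feq g f = (INF a. inf (g a \<Rrightarrow> f a) (f a \<Rrightarrow> g a))"

text \<open>States of type 'a (nonempty since HOL types are), alphabet of type 's.\<close>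

record ('a, 's, 'l) fuzzy_automaton =
  delta :: "'a \<Rightarrow> 's \<Rightarrow> 'a \<Rightarrow> 'l"
  sigma :: "'a \<Rightarrow> 'l"
  tau :: "'a \<Rightarrow> 'l"

definition delta_s :: "('a, 's, 'l) fuzzy_automaton \<Rightarrow> 's \<Rightarrow> 'a \<Rightarrow> 'a \<Rightarrow> 'l" where
  "delta_s A s x y = delta A x s y"

definition at_state :: "('a, 's, 'l::complete_residuated_lattice) fuzzy_automaton \<Rightarrow> 'a \<Rightarrow> ('a, 's, 'l) fuzzy_automaton" where
  "at_state A x = A\<lparr>sigma := (\<lambda>y. if y = x then top else bot)\<rparr>"

fun rvec :: "('a, 's, 'l::complete_residuated_lattice) fuzzy_automaton \<Rightarrow> 's list \<Rightarrow> 'a \<Rightarrow> 'l" where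
  "rvec A [] = tau A"
| "rvec A (s # w) = rel_set_comp (delta_s A s) (rvec A w)"

definition lang :: "('a, 's, 'l::complete_residuated_lattice) fuzzy_automaton \<Rightarrow> 's list \<Rightarrow> 'l" where
  "lang A w = (SUP a. sigma A a \<otimes> rvec A w a)"

definition lang_le :: "nat \<Rightarrow> ('a, 's, 'l::complete_residuated_lattice) fuzzy_automaton \<Rightarrow> 's list \<Rightarrow> 'l" where
  "lang_le n A w = (if length w \<le> n then lang A w else bot)"

definition rel_norm :: "('a \<Rightarrow> 'b \<Rightarrow> 'l::complete_residuated_lattice) \<Rightarrow> ('a, 's, 'l) fuzzy_automaton \<Rightarrow> ('b, 's, 'l) fuzzy_automaton \<Rightarrow> 'l" where
  "rel_norm \<phi> A A' = fsubs (sigma A) (set_rel_comp (sigma A') (conv \<phi>))"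

definition rel_norm_b :: "('a \<Rightarrow> 'b \<Rightarrow> 'l::complete_residuated_lattice) \<Rightarrow> ('a, 's, 'l) fuzzy_automaton \<Rightarrow> ('b, 's, 'l) fuzzy_automaton \<Rightarrow> 'l" where
  "rel_norm_b \<phi> A A' = inf (rel_norm \<phi> A A') (rel_norm (conv \<phi>) A' A)"

definition depth_bounded_bisim :: "(nat \<Rightarrow> 'a \<Rightarrow> 'b \<Rightarrow> 'l::complete_residuated_lattice) \<Rightarrow> ('a, 's, 'l) fuzzy_automaton \<Rightarrow> ('b, 's, 'l) fuzzy_automaton \<Rightarrow> bool" where
  "depth_bounded_bisim \<phi> A A' \<longleftrightarrow>
     (\<forall>n\<ge>1. \<phi> n \<le> \<phi> (n - 1))
   \<and> rel_set_comp (conv (\<phi> 0)) (tau A) \<le> tau A'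
   \<and> rel_set_comp (\<phi> 0) (tau A') \<le> tau A
   \<and> (\<forall>s. \<forall>n\<ge>1.
        rel_comp (conv (\<phi> n)) (delta_s A s) \<le> rel_comp (delta_s A' s) (conv (\<phi> (n - 1)))
      \<and> rel_comp (\<phi> n) (delta_s A' s) \<le> rel_comp (delta_s A s) (\<phi> (n - 1)))"

end

theory Submission
  imports Defs
begin

text \<open>
  Since \<open>\<otimes>\<close> is monotone and distributes over arbitrary suprema, induction on a word
  \<open>w\<close> with \<open>|w| \<le> n\<close> gives \<open>\<phi>_n(x,x') \<otimes> L(A_x)(w) \<le> L(A'_x')(w)\<close>: each letter
  consumes one level of the chain \<open>\<phi>_n \<le> \<phi>_(n-1) \<le> ...\<close>, and the empty word uses the
  condition on \<open>\<phi>_0\<close> and the terminal fuzzy sets. Composing in addition with the initial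
  fuzzy sets costs the factor \<open>\<parallel>\<phi>_n\<parallel>\<close>. By residuation these are one half of each equality
  degree; the converse relations \<open>\<phi>_n\<inverse>\<close> form the other half of the bisimulation and give
  the other inequality.
\<close>

lemma otimes_mono_left: "(a::'l::complete_residuated_lattice) \<le> b \<Longrightarrow> a \<otimes> c \<le> b \<otimes> c"
  by (meson order_trans order_refl residuation)

lemma otimes_mono_right: "(a::'l::complete_residuated_lattice) \<le> b \<Longrightarrow> c \<otimes> a \<le> c \<otimes> b"
  using otimes_mono_left otimes_commute by metis

lemma SUP_otimes_distrib: "(SUP i. f i) \<otimes> (c::'l::complete_residuated_lattice) = (SUP i. f i \<otimes> c)"
proof (rule antisym)
  have "(SUP i. f i) \<le> (c \<Rrightarrow> (SUP i. f i \<otimes> c))"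
    by (rule SUP_least) (metis UNIV_I SUP_upper residuation)
  then show "(SUP i. f i) \<otimes> c \<le> (SUP i. f i \<otimes> c)"
    using residuation by blast
  show "(SUP i. f i \<otimes> c) \<le> (SUP i. f i) \<otimes> c"
    by (intro SUP_least otimes_mono_left SUP_upper) simp
qed

lemma otimes_SUP_distrib: "(c::'l::complete_residuated_lattice) \<otimes> (SUP i. f i) = (SUP i. c \<otimes> f i)"
  using SUP_otimes_distrib[of f c] by (simp add: otimes_commute)

lemma otimes_bot [simp]: "(c::'l::complete_residuated_lattice) \<otimes> bot = bot"
  using residuation[of bot c bot] by (simp add: bot_unique otimes_commute)

lemma top_otimes [simp]: "top \<otimes> (c::'l::complete_residuated_lattice) = c"
  by (metis otimes_commute otimes_top)

lemma SUP_otimes_le_SUP_otimes: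
  fixes a :: "'l::complete_residuated_lattice"
  assumes "\<And>y. \<psi> y \<otimes> a \<le> g y"
  shows "(SUP y. d y \<otimes> \<psi> y) \<otimes> a \<le> (SUP y. d y \<otimes> g y)"
proof -
  have "(SUP y. d y \<otimes> \<psi> y) \<otimes> a = (SUP y. d y \<otimes> (\<psi> y \<otimes> a))"
    by (simp add: SUP_otimes_distrib otimes_assoc)
  also have "\<dots> \<le> (SUP y. d y \<otimes> g y)"
    by (intro SUP_mono' otimes_mono_right assms)
  finally show ?thesis .
qed

lemma le_feqI:
  fixes c :: "'l::complete_residuated_lattice"
  assumes "\<And>w. c \<otimes> g w \<le> f w" and "\<And>w. c \<otimes> f w \<le> g w"
  shows "c \<le> feq g f"
  unfolding feq_def
  by (intro INF_greatest le_infI) (metis assms residuation otimes_commute)+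

lemma conv_conv [simp]: "conv (conv \<phi>) = \<phi>"
  by (simp add: conv_def[abs_def])

lemma conv_mono: "\<phi> \<le> \<psi> \<Longrightarrow> conv \<phi> \<le> conv \<psi>"
  by (auto simp: conv_def le_fun_def)

definition depth_bounded_simulation ::
  "(nat \<Rightarrow> 'a \<Rightarrow> 'b \<Rightarrow> 'l::complete_residuated_lattice) \<Rightarrow> ('a, 's, 'l) fuzzy_automaton \<Rightarrow> ('b, 's, 'l) fuzzy_automaton \<Rightarrow> bool" where
  "depth_bounded_simulation \<phi> A A' \<longleftrightarrow>
     antimono \<phi>
   \<and> rel_set_comp (conv (\<phi> 0)) (tau A) \<le> tau A'
   \<and> (\<forall>s n. rel_comp (conv (\<phi> (Suc n))) (delta_s A s) \<le> rel_comp (delta_s A' s) (conv (\<phi> n)))"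

lemma depth_bounded_bisim_simulations:
  assumes "depth_bounded_bisim \<phi> A A'"
  shows "depth_bounded_simulation \<phi> A A'"
    and "depth_bounded_simulation (\<lambda>n. conv (\<phi> n)) A' A"
proof -
  have "\<phi> (Suc n) \<le> \<phi> n" for n
    using assms unfolding depth_bounded_bisim_def by (metis diff_Suc_1 le_add1 plus_1_eq_Suc)
  moreover have
    "rel_comp (conv (\<phi> (Suc n))) (delta_s A s) \<le> rel_comp (delta_s A' s) (conv (\<phi> n))"
    "rel_comp (\<phi> (Suc n)) (delta_s A' s) \<le> rel_comp (delta_s A s) (\<phi> n)" for s n
    using assms unfolding depth_bounded_bisim_def by (metis diff_Suc_1 le_add1 plus_1_eq_Suc)+
  ultimately show "depth_bounded_simulation \<phi> A A'"
    and "depth_bounded_simulation (\<lambda>n. conv (\<phi> n)) A' A"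
    using assms unfolding depth_bounded_bisim_def depth_bounded_simulation_def
    by (auto simp: antimono_iff_le_Suc conv_mono)
qed

lemma depth_bounded_simulation_rvec:
  assumes sim: "depth_bounded_simulation \<phi> A A'"
  shows "length w \<le> n \<Longrightarrow> \<phi> n x x' \<otimes> rvec A w x \<le> rvec A' w x'"
proof (induction w arbitrary: n x x')
  case Nil
  have "\<phi> n x x' \<otimes> tau A x \<le> \<phi> 0 x x' \<otimes> tau A x"
    using sim unfolding depth_bounded_simulation_def
    by (intro otimes_mono_left) (simp add: antimonoD le_funD)
  also have "\<dots> \<le> rel_set_comp (conv (\<phi> 0)) (tau A) x'"
    unfolding rel_set_comp_def conv_def by (rule SUP_upper) simp
  also have "\<dots> \<le> tau A' x'"
    using sim unfolding depth_bounded_simulation_def by (simp add: le_fun_def)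
  finally show ?case by simp
next
  case (Cons s v)
  then obtain m where n: "n = Suc m" and v: "length v \<le> m"
    by (cases n) auto
  have "\<phi> n x x' \<otimes> delta_s A s x y \<otimes> rvec A v y \<le> rvec A' (s # v) x'" for y
  proof -
    have "\<phi> n x x' \<otimes> delta_s A s x y \<le> rel_comp (conv (\<phi> n)) (delta_s A s) x' y"
      unfolding rel_comp_def conv_def by (rule SUP_upper) simp
    also have "\<dots> \<le> rel_comp (delta_s A' s) (conv (\<phi> m)) x' y"
      using sim unfolding depth_bounded_simulation_def n by (simp add: le_fun_def)
    finally have "\<phi> n x x' \<otimes> delta_s A s x y \<otimes> rvec A v y
        \<le> (SUP y'. delta_s A' s x' y' \<otimes> \<phi> m y y') \<otimes> rvec A v y"
      by (intro otimes_mono_left) (simp add: rel_comp_def conv_def)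
    also have "\<dots> \<le> (SUP y'. delta_s A' s x' y' \<otimes> rvec A' v y')"
      by (intro SUP_otimes_le_SUP_otimes Cons.IH v)
    finally show ?thesis by (simp add: rel_set_comp_def)
  qed
  then show ?case
    by (simp add: rel_set_comp_def otimes_SUP_distrib otimes_assoc[symmetric] SUP_least)
qed

lemma lang_at_state: "lang (at_state A x) w = rvec A w x"
proof -
  have "rvec (at_state A x) w = rvec A w"
    by (induction w) (simp_all add: at_state_def delta_s_def[abs_def])
  then have "lang (at_state A x) w = (SUP a. (if a = x then top else bot) \<otimes> rvec A w a)"
    by (simp add: lang_def at_state_def)
  also have "\<dots> = rvec A w x"
    by (intro antisym SUP_least SUP_upper2[of x]) (simp_all add: otimes_commute[of bot])
  finally show ?thesis .
qed

lemma depth_bounded_simulation_lang_le_at_state: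
  assumes "depth_bounded_simulation \<phi> A A'"
  shows "\<phi> n x x' \<otimes> lang_le n (at_state A x) w \<le> lang_le n (at_state A' x') w"
  using depth_bounded_simulation_rvec[OF assms, of w n x x']
  by (simp add: lang_le_def lang_at_state)

lemma depth_bounded_simulation_lang_le:
  assumes sim: "depth_bounded_simulation \<phi> A A'"
  shows "rel_norm (\<phi> n) A A' \<otimes> lang_le n A w \<le> lang_le n A' w"
proof (cases "length w \<le> n")
  case True
  have "rel_norm (\<phi> n) A A' \<otimes> sigma A a \<otimes> rvec A w a \<le> lang A' w" for a
  proof -
    have "rel_norm (\<phi> n) A A' \<le> (sigma A a \<Rrightarrow> set_rel_comp (sigma A') (conv (\<phi> n)) a)"
      unfolding rel_norm_def fsubs_def by (rule INF_lower) simp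
    then have "rel_norm (\<phi> n) A A' \<otimes> sigma A a \<le> (SUP a'. sigma A' a' \<otimes> \<phi> n a a')"
      by (simp add: residuation set_rel_comp_def conv_def)
    then have "rel_norm (\<phi> n) A A' \<otimes> sigma A a \<otimes> rvec A w a
        \<le> (SUP a'. sigma A' a' \<otimes> \<phi> n a a') \<otimes> rvec A w a"
      by (rule otimes_mono_left)
    also have "\<dots> \<le> lang A' w"
      unfolding lang_def
      by (intro SUP_otimes_le_SUP_otimes depth_bounded_simulation_rvec[OF sim True])
    finally show ?thesis .
  qed
  with True show ?thesis
    by (simp add: lang_le_def lang_def otimes_SUP_distrib otimes_assoc[symmetric] SUP_least)
qed (simp add: lang_le_def)

theorem mainTheorem14:
  fixes \<phi> :: "nat \<Rightarrow> 'a \<Rightarrow> 'b \<Rightarrow> 'l::complete_residuated_lattice"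
    and A :: "('a, 's, 'l) fuzzy_automaton"
    and A' :: "('b, 's, 'l) fuzzy_automaton"
  assumes "depth_bounded_bisim \<phi> A A'"
  shows "(\<forall>n x x'. \<phi> n x x' \<le> feq (lang_le n (at_state A x)) (lang_le n (at_state A' x')))
       \<and> (\<forall>n. rel_norm_b (\<phi> n) A A' \<le> feq (lang_le n A) (lang_le n A'))"
proof (intro conjI allI)
  note forward = depth_bounded_bisim_simulations(1)[OF assms]
    and backward = depth_bounded_bisim_simulations(2)[OF assms]
  fix n x x'
  show "\<phi> n x x' \<le> feq (lang_le n (at_state A x)) (lang_le n (at_state A' x'))"
    using depth_bounded_simulation_lang_le_at_state[OF forward, of n x x']
      depth_bounded_simulation_lang_le_at_state[OF backward, of n x' x]
    by (intro le_feqI) (simp_all add: conv_def)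
  show "rel_norm_b (\<phi> n) A A' \<le> feq (lang_le n A) (lang_le n A')"
  proof (rule le_feqI)
    fix w
    show "rel_norm_b (\<phi> n) A A' \<otimes> lang_le n A w \<le> lang_le n A' w"
      using depth_bounded_simulation_lang_le[OF forward, of n w]
      unfolding rel_norm_b_def by (meson inf_le1 order_trans otimes_mono_left)
    show "rel_norm_b (\<phi> n) A A' \<otimes> lang_le n A' w \<le> lang_le n A w"
      using depth_bounded_simulation_lang_le[OF backward, of n w]
      unfolding rel_norm_b_def by (meson inf_le2 order_trans otimes_mono_left)
  qed
qed

end
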